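(* Let $G\in\mathrm{PLT}$ and let $A,B$ be finitely generated subgroups of $G'$. Then there exists $g\in G$ such that $A^g$ and $B$ centralize each other (every element of $A^g$ commutes with every element of $B$).
   Context: $\mathrm{PLT}$ is the class of groups that act faithfully by piecewise linear orientation preserving self-homeomorphisms of $[0,1]$ (each differentiable except at finitely many points) with no common fixed point in $(0,1)$. $G'$ is the commutator subgroup, and $A^g=gAg^{-1}$. *)

theory Defs
  imports "HOL-Analysis.Analysis" "HOL-Algebra.Algebra"
begin

text \<open>An orientation-preserving piecewise linear homeomorphism of [0,1], extended
  by the identity outside [0,1] (so that composition is the group law).\<close>
definition PL_homeo :: "(real \<Rightarrow> real) \<Rightarrow> bool" where
  "PL_homeo f \<longleftrightarrow>
     (\<forall>x. x \<notin> {0..1} \<longrightarrow> f x = x) \<and>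
     f 0 = 0 \<and> f 1 = 1 \<and>
     strict_mono_on {0..1} f \<and>
     continuous_on {0..1} f \<and>
     (\<exists>S. finite S \<and> {0,1} \<subseteq> S \<and> S \<subseteq> {0..1} \<and>
        (\<forall>a\<in>S. \<forall>b\<in>S. a < b \<and> {a<..<b} \<inter> S = {} \<longrightarrow>
           (\<exists>m c. \<forall>x\<in>{a..b}. f x = m * x + c)))"

definition homeo_grp :: "(real \<Rightarrow> real) set \<Rightarrow> (real \<Rightarrow> real) monoid" where
  "homeo_grp G = \<lparr>carrier = G, mult = (\<circ>), one = id\<rparr>"

text \<open>G is a group in PLT: a group of PL orientation-preserving homeomorphisms
  of [0,1] (acting faithfully, being a group of maps) with no common fixed
  point in (0,1).\<close>
definition PLT_group :: "(real \<Rightarrow> real) set \<Rightarrow> bool" where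
  "PLT_group G \<longleftrightarrow>
     group (homeo_grp G) \<and> (\<forall>f\<in>G. PL_homeo f) \<and>
     (\<forall>t\<in>{0<..<1}. \<exists>g\<in>G. g t \<noteq> t)"

definition conj_set :: "(real \<Rightarrow> real) set \<Rightarrow> (real \<Rightarrow> real) set \<Rightarrow> (real \<Rightarrow> real) \<Rightarrow> (real \<Rightarrow> real) set" where
  "conj_set G A g = (\<lambda>a. g \<circ> a \<circ> inv\<^bsub>homeo_grp G\<^esub> g) ` A"

end

theory Submission
  imports Defs
begin

text \<open>Near each endpoint p of [0,1] an element of G is linear, and its slope there is
  multiplicative under composition. As positive reals commute, every commutator has slope 1 at
  both ends, so each element of G' is the identity near 0 and near 1, and a finitely generated
  subgroup of G' fixes some [0,d] and [1-d,1] pointwise. On the other hand the infimum of the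
  G-orbit of a point of (0,1) is fixed by all of G, hence is 0; so some g in G pushes 1-d
  below d. Then g A g^-1 moves only points below d and B only points above d, and
  homeomorphisms with such separated supports commute.\<close>

lemma homeo_grp_simps [simp]:
  "carrier (homeo_grp G) = G" "mult (homeo_grp G) = (\<circ>)" "one (homeo_grp G) = id"
  by (simp_all add: homeo_grp_def)

lemma homeo_grp_inv:
  assumes "group (homeo_grp G)" "g \<in> G"
  shows "inv\<^bsub>homeo_grp G\<^esub> g \<in> G" "g \<circ> inv\<^bsub>homeo_grp G\<^esub> g = id"
    "inv\<^bsub>homeo_grp G\<^esub> g \<circ> g = id"
proof -
  interpret group "homeo_grp G" by fact
  show "inv\<^bsub>homeo_grp G\<^esub> g \<in> G" using inv_closed[of g] assms(2) by simp
  show "g \<circ> inv\<^bsub>homeo_grp G\<^esub> g = id" using r_inv[of g] assms(2) by simp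
  show "inv\<^bsub>homeo_grp G\<^esub> g \<circ> g = id" using l_inv[of g] assms(2) by simp
qed

lemma homeo_grp_closed:
  assumes "group (homeo_grp G)"
  shows "id \<in> G" "f \<in> G \<Longrightarrow> g \<in> G \<Longrightarrow> f \<circ> g \<in> G"
proof -
  interpret group "homeo_grp G" by fact
  show "id \<in> G" using one_closed by simp
  show "f \<in> G \<Longrightarrow> g \<in> G \<Longrightarrow> f \<circ> g \<in> G" using m_closed[of f g] by simp
qed

lemma pointwise_stabilizer_subgroup:
  assumes "group (homeo_grp G)"
  shows "subgroup {f \<in> G. \<forall>x\<in>E. f x = x} (homeo_grp G)"
proof -
  interpret group "homeo_grp G" by fact
  show ?thesis
  proof (rule subgroupI)
    show "{f \<in> G. \<forall>x\<in>E. f x = x} \<subseteq> carrier (homeo_grp G)" by auto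
    show "{f \<in> G. \<forall>x\<in>E. f x = x} \<noteq> {}" using homeo_grp_closed(1)[OF assms] by auto
  next
    fix f assume f: "f \<in> {f \<in> G. \<forall>x\<in>E. f x = x}"
    have "(inv\<^bsub>homeo_grp G\<^esub> f) x = x" if "x \<in> E" for x
    proof -
      have "(inv\<^bsub>homeo_grp G\<^esub> f) x = (inv\<^bsub>homeo_grp G\<^esub> f \<circ> f) x" using f that by simp
      also have "\<dots> = x" using homeo_grp_inv(3)[OF assms, of f] f by simp
      finally show ?thesis .
    qed
    then show "inv\<^bsub>homeo_grp G\<^esub> f \<in> {f \<in> G. \<forall>x\<in>E. f x = x}"
      using f homeo_grp_inv(1)[OF assms] by blast
  next
    fix f g assume "f \<in> {f \<in> G. \<forall>x\<in>E. f x = x}" "g \<in> {f \<in> G. \<forall>x\<in>E. f x = x}"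
    then show "f \<otimes>\<^bsub>homeo_grp G\<^esub> g \<in> {f \<in> G. \<forall>x\<in>E. f x = x}"
      using homeo_grp_closed(2)[OF assms] by simp
  qed
qed

lemma commute_if_supports_separated:
  assumes "inj f" "inj g" "\<And>x. x \<notin> U \<Longrightarrow> f x = x" "\<And>x. x \<in> U \<Longrightarrow> g x = x"
  shows "f \<circ> g = g \<circ> f"
proof
  fix x
  show "(f \<circ> g) x = (g \<circ> f) x"
  proof (cases "x \<in> U")
    case True
    then have "f x \<in> U" using assms(1,3) by (metis injD)
    then show ?thesis using True assms(4) by simp
  next
    case False
    then have "g x \<notin> U" using assms(2,4) by (metis injD)
    then show ?thesis using False assms(3) by simp
  qed
qed

lemma conjugate_fixes_above:
  fixes g a :: "real \<Rightarrow> real"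
  assumes "strict_mono g" "g \<circ> g' = id" "\<And>y. t \<le> y \<Longrightarrow> a y = y" "g t \<le> x"
  shows "(g \<circ> a \<circ> g') x = x"
proof -
  have gg': "g (g' x) = x" using assms(2) by (metis comp_apply id_apply)
  then have "t \<le> g' x" using assms(1,4) by (metis strict_mono_less_eq)
  then show ?thesis using assms(3) gg' by simp
qed

lemma Inf_le_image_of_invariant:
  fixes S :: "real set"
  assumes "S \<noteq> {}" "bdd_below S" "continuous_on (closure S) h" "h ` S \<subseteq> S"
  shows "Inf S \<le> h (Inf S)"
proof -
  have "h ` closure S \<subseteq> {Inf S..}"
    using assms(2,4) by (intro image_closure_subset[OF assms(3)]) (auto intro: cInf_lower)
  then show ?thesis using closure_contains_Inf[OF assms(1,2)] by auto
qed

lemma PL_homeoD: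
  assumes "PL_homeo f"
  shows "x \<notin> {0..1} \<Longrightarrow> f x = x" "f 0 = 0" "f 1 = 1" "strict_mono_on {0..1} f"
    "continuous_on {0..1} f"
  using assms unfolding PL_homeo_def by blast+

lemma PL_homeo_maps_unit_interval:
  assumes "PL_homeo f" shows "f ` {0..1} \<subseteq> {0..1}"
proof (rule image_subsetI)
  fix x :: real assume "x \<in> {0..1}"
  then have "f 0 \<le> f x" "f x \<le> f 1"
    by (auto intro!: strict_mono_on_leD[OF PL_homeoD(4)[OF assms]])
  then show "f x \<in> {0..1}" using PL_homeoD(2,3)[OF assms] by simp
qed

lemma PL_homeo_strict_mono:
  assumes "PL_homeo f" shows "strict_mono f"
proof (rule strict_monoI)
  fix x y :: real assume xy: "x < y"
  note out = PL_homeoD(1)[OF assms] and sm = PL_homeoD(4)[OF assms]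
  have unit: "\<And>z. z \<in> {0..1} \<Longrightarrow> f z \<in> {0..1}"
    using PL_homeo_maps_unit_interval[OF assms] by (auto simp: image_subset_iff)
  show "f x < f y"
  proof (cases "x \<in> {0..1} \<and> y \<in> {0..1}")
    case True
    then show ?thesis using sm xy by (auto intro: strict_mono_onD)
  next
    case False
    then show ?thesis
      using xy out[of x] out[of y] unit[of x] unit[of y] by (smt (verit) atLeastAtMost_iff)
  qed
qed

lemma PL_homeo_inj: "PL_homeo f \<Longrightarrow> inj f"
  by (simp add: PL_homeo_strict_mono strict_mono_imp_inj_on)

definition linear_germ :: "real \<Rightarrow> (real \<Rightarrow> real) \<Rightarrow> real \<Rightarrow> bool" where
  "linear_germ p f m \<longleftrightarrow> (\<exists>d>0. \<forall>x\<in>{0..1}. \<bar>x - p\<bar> \<le> d \<longrightarrow> f x = p + m * (x - p))"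

lemma linear_germ_id: "linear_germ p id 1"
  unfolding linear_germ_def by (auto intro: exI[of _ 1])

lemma linear_germ_comp:
  assumes f: "linear_germ p f m" and g: "linear_germ p g n" and "n > 0"
    and g_unit: "g ` {0..1} \<subseteq> {0..1}"
  shows "linear_germ p (f \<circ> g) (m * n)"
proof -
  obtain d1 where d1: "d1 > 0" "\<forall>x\<in>{0..1}. \<bar>x - p\<bar> \<le> d1 \<longrightarrow> f x = p + m * (x - p)"
    using f unfolding linear_germ_def by blast
  obtain d2 where d2: "d2 > 0" "\<forall>x\<in>{0..1}. \<bar>x - p\<bar> \<le> d2 \<longrightarrow> g x = p + n * (x - p)"
    using g unfolding linear_germ_def by blast
  have "(f \<circ> g) x = p + m * n * (x - p)" if x: "x \<in> {0..1}" "\<bar>x - p\<bar> \<le> min d2 (d1 / n)" for x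
  proof -
    have gx: "g x = p + n * (x - p)" using d2(2) x by simp
    have "n * \<bar>x - p\<bar> \<le> d1" using x \<open>n > 0\<close> by (simp add: pos_le_divide_eq mult.commute)
    then have "\<bar>g x - p\<bar> \<le> d1" using \<open>n > 0\<close> by (simp add: gx abs_mult)
    then have "f (g x) = p + m * (g x - p)" using d1(2) g_unit x(1) by blast
    then show ?thesis by (simp add: gx)
  qed
  moreover have "min d2 (d1 / n) > 0" using d1 d2 \<open>n > 0\<close> by simp
  ultimately show ?thesis unfolding linear_germ_def by blast
qed

lemma linear_germ_unique:
  assumes "linear_germ p f m" "linear_germ p f m'" "p \<in> {0..1}"
  shows "m = m'"
proof -
  obtain d where d: "d > 0" "\<forall>x\<in>{0..1}. \<bar>x - p\<bar> \<le> d \<longrightarrow> f x = p + m * (x - p)"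
    using assms(1) unfolding linear_germ_def by blast
  obtain d' where d': "d' > 0" "\<forall>x\<in>{0..1}. \<bar>x - p\<bar> \<le> d' \<longrightarrow> f x = p + m' * (x - p)"
    using assms(2) unfolding linear_germ_def by blast
  define e where "e = min (min d d') (1/2)"
  define x where "x = (if p \<le> 1/2 then p + e else p - e)"
  have "e > 0" "e \<le> d" "e \<le> d'" using d d' by (auto simp: e_def)
  moreover have "x \<in> {0..1}" "\<bar>x - p\<bar> = e" using assms(3) \<open>e > 0\<close> by (auto simp: x_def e_def)
  ultimately have "m * (x - p) = m' * (x - p)" "x \<noteq> p" using d(2) d'(2) by force+
  then show "m = m'" by simp
qed

lemma PL_homeo_linear_germ:
  assumes "PL_homeo f" "p \<in> {0, 1}"
  obtains m where "m > 0" "linear_germ p f m"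
proof -
  obtain S where S: "finite S" "{0, 1} \<subseteq> S" "S \<subseteq> {0..1}"
    and affine: "\<forall>a\<in>S. \<forall>b\<in>S. a < b \<and> {a<..<b} \<inter> S = {} \<longrightarrow> (\<exists>k c. \<forall>x\<in>{a..b}. f x = k * x + c)"
    using assms(1) unfolding PL_homeo_def by blast
  have fp: "f p = p" using PL_homeoD(2,3)[OF assms(1)] assms(2) by auto
  note sm = PL_homeoD(4)[OF assms(1)]
  define a where "a = arg_min_on (\<lambda>x. \<bar>x - p\<bar>) (S - {p})"
  have ne: "S - {p} \<noteq> {}" using S(2) assms(2) by auto
  have a: "a \<in> S" "a \<noteq> p" using arg_min_if_finite(1)[OF _ ne] S(1) by (auto simp: a_def)
  have nearest: "\<bar>a - p\<bar> \<le> \<bar>x - p\<bar>" if "x \<in> S" "x \<noteq> p" for x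
    using arg_min_least[of "S - {p}" x "\<lambda>x. \<bar>x - p\<bar>"] S(1) that by (auto simp: a_def)
  have "{min p a<..<max p a} \<inter> S = {}"
  proof (rule ccontr)
    assume "{min p a<..<max p a} \<inter> S \<noteq> {}"
    then obtain x where "x \<in> S" "min p a < x" "x < max p a" by auto
    then show False using nearest[of x] by (auto simp: min_def max_def split: if_splits)
  qed
  moreover have "min p a \<in> S" "max p a \<in> S" "min p a < max p a"
    using a S(2) assms(2) by (auto simp: min_def max_def)
  ultimately obtain k c where kc: "\<forall>x\<in>{min p a..max p a}. f x = k * x + c"
    using affine by blast
  have "f p = k * p + c" using kc by simp
  then have c: "c = p - k * p" using fp by simp
  have germ: "f x = p + k * (x - p)" if "x \<in> {min p a..max p a}" for x
  proof -
    have "f x = k * x + c" using kc that by blast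
    then show ?thesis by (simp add: c algebra_simps)
  qed
  have unit: "a \<in> {0..1}" "p \<in> {0..1}" using a(1) S(3) assms(2) by auto
  consider "p < a" | "a < p" using a(2) by linarith
  then have "0 < (f a - f p) * (a - p)"
  proof cases
    case 1
    then have "f p < f a" using strict_mono_onD[OF sm] unit by blast
    then show ?thesis using 1 by simp
  next
    case 2
    then have "f a < f p" using strict_mono_onD[OF sm] unit by blast
    then show ?thesis using 2 by (simp add: mult_neg_neg)
  qed
  also have "\<dots> = k * (a - p)\<^sup>2" by (simp add: germ power2_eq_square)
  finally have "k > 0" by (simp add: zero_less_mult_iff)
  moreover have "linear_germ p f k"
    unfolding linear_germ_def
  proof (intro exI[of _ "\<bar>a - p\<bar>"] conjI ballI impI)
    show "\<bar>a - p\<bar> > 0" using a by simp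
    fix x :: real assume "x \<in> {0..1}" "\<bar>x - p\<bar> \<le> \<bar>a - p\<bar>"
    then have "x \<in> {min p a..max p a}" using assms(2) a S(3) by auto
    then show "f x = p + k * (x - p)" by (rule germ)
  qed
  ultimately show ?thesis using that by blast
qed

lemma commutator_linear_germ:
  assumes PL: "PL_homeo f" "PL_homeo h" "PL_homeo f'" "PL_homeo h'"
    and inv: "f \<circ> f' = id" "h \<circ> h' = id" and p: "p \<in> {0, 1}"
  shows "linear_germ p (f \<circ> h \<circ> f' \<circ> h') 1"
proof -
  obtain mf mh mf' mh' where pos: "mf > 0" "mh > 0" "mf' > 0" "mh' > 0"
    and germ: "linear_germ p f mf" "linear_germ p h mh" "linear_germ p f' mf'" "linear_germ p h' mh'"
    using PL_homeo_linear_germ[OF _ p] PL by metis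
  have unit: "h ` {0..1} \<subseteq> {0..1}" "f' ` {0..1} \<subseteq> {0..1}" "h' ` {0..1} \<subseteq> {0..1}"
    using PL_homeo_maps_unit_interval PL by auto
  have p01: "p \<in> {0..1}" using p by auto
  have "mf * mf' = 1"
    using linear_germ_unique[OF linear_germ_comp[OF germ(1,3) pos(3) unit(2)] _ p01] inv(1) linear_germ_id
    by simp
  moreover have "mh * mh' = 1"
    using linear_germ_unique[OF linear_germ_comp[OF germ(2,4) pos(4) unit(3)] _ p01] inv(2) linear_germ_id
    by simp
  moreover have "linear_germ p (f \<circ> h \<circ> f' \<circ> h') (mf * mh * mf' * mh')"
    using linear_germ_comp germ pos unit by metis
  ultimately show ?thesis by (simp add: algebra_simps)
qed

definition near_ends :: "real \<Rightarrow> real set" where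
  "near_ends d = {..d} \<union> {1 - d..}"

definition trivial_near_ends :: "(real \<Rightarrow> real) \<Rightarrow> bool" where
  "trivial_near_ends f \<longleftrightarrow> (\<forall>\<^sub>F d in at_right 0. \<forall>x\<in>near_ends d. f x = x)"

lemma trivial_near_ends_if_slope_1:
  assumes "PL_homeo f" "linear_germ 0 f 1" "linear_germ 1 f 1"
  shows "trivial_near_ends f"
proof -
  obtain d0 where d0: "d0 > 0" "\<forall>x\<in>{0..1}. \<bar>x\<bar> \<le> d0 \<longrightarrow> f x = x"
    using assms(2) unfolding linear_germ_def by auto
  obtain d1 where d1: "d1 > 0" "\<forall>x\<in>{0..1}. \<bar>x - 1\<bar> \<le> d1 \<longrightarrow> f x = x"
    using assms(3) unfolding linear_germ_def by auto
  note out = PL_homeoD(1)[OF assms(1)]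
  have "f x = x" if "d < min d0 d1" "x \<in> near_ends d" for d x
  proof (cases "x \<in> {0..1}")
    case True
    then show ?thesis using that d0 d1 unfolding near_ends_def by auto
  qed (use out in auto)
  then show ?thesis
    unfolding trivial_near_ends_def eventually_at_right_field using d0 d1
    by (intro exI[of _ "min d0 d1"]) auto
qed

lemma trivial_near_ends_subgroup:
  assumes "group (homeo_grp G)"
  shows "subgroup {f \<in> G. trivial_near_ends f} (homeo_grp G)"
proof -
  interpret group "homeo_grp G" by fact
  show ?thesis
  proof (rule subgroupI)
    show "{f \<in> G. trivial_near_ends f} \<subseteq> carrier (homeo_grp G)" by auto
    show "{f \<in> G. trivial_near_ends f} \<noteq> {}"
      using homeo_grp_closed(1)[OF assms] by (auto simp: trivial_near_ends_def)
  next
    fix f assume "f \<in> {f \<in> G. trivial_near_ends f}"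
    then have f: "f \<in> G" and ev: "\<forall>\<^sub>F d in at_right 0. f \<in> {f \<in> G. \<forall>x\<in>near_ends d. f x = x}"
      unfolding trivial_near_ends_def by auto
    from ev have "\<forall>\<^sub>F d in at_right 0.
        inv\<^bsub>homeo_grp G\<^esub> f \<in> {f \<in> G. \<forall>x\<in>near_ends d. f x = x}"
      by (rule eventually_mono) (rule subgroup.m_inv_closed[OF pointwise_stabilizer_subgroup[OF assms]])
    then show "inv\<^bsub>homeo_grp G\<^esub> f \<in> {f \<in> G. trivial_near_ends f}"
      using homeo_grp_inv(1)[OF assms f] unfolding trivial_near_ends_def by (auto elim: eventually_mono)
  next
    fix f g assume "f \<in> {f \<in> G. trivial_near_ends f}" "g \<in> {f \<in> G. trivial_near_ends f}"
    then show "f \<otimes>\<^bsub>homeo_grp G\<^esub> g \<in> {f \<in> G. trivial_near_ends f}"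
      using homeo_grp_closed(2)[OF assms] unfolding trivial_near_ends_def
      by (auto elim: eventually_elim2)
  qed
qed

lemma derived_trivial_near_ends:
  assumes "PLT_group G" "f \<in> derived (homeo_grp G) G"
  shows "trivial_near_ends f"
proof -
  have gr: "group (homeo_grp G)" and PL: "\<And>f. f \<in> G \<Longrightarrow> PL_homeo f"
    using assms(1) unfolding PLT_group_def by auto
  have "derived_set (homeo_grp G) G \<subseteq> {f \<in> G. trivial_near_ends f}"
  proof
    fix c assume "c \<in> derived_set (homeo_grp G) G"
    then obtain h1 h2 where h: "h1 \<in> G" "h2 \<in> G"
      and c: "c = h1 \<circ> h2 \<circ> inv\<^bsub>homeo_grp G\<^esub> h1 \<circ> inv\<^bsub>homeo_grp G\<^esub> h2"
      by auto
    have G: "inv\<^bsub>homeo_grp G\<^esub> h1 \<in> G" "inv\<^bsub>homeo_grp G\<^esub> h2 \<in> G" "c \<in> G"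
      using h c homeo_grp_inv(1)[OF gr] homeo_grp_closed(2)[OF gr] by auto
    have "linear_germ p c 1" if "p \<in> {0, 1}" for p
      unfolding c using commutator_linear_germ[OF PL PL PL PL _ _ that] h G homeo_grp_inv(2)[OF gr]
      by metis
    then show "c \<in> {f \<in> G. trivial_near_ends f}"
      using trivial_near_ends_if_slope_1 PL G by simp
  qed
  then show ?thesis
    using group.generate_subgroup_incl[OF gr _ trivial_near_ends_subgroup[OF gr]] assms(2)
    unfolding derived_def by blast
qed

lemma PLT_orbit_Inf:
  assumes "PLT_group G" "b \<in> {0<..<1}"
  shows "Inf ((\<lambda>g. g b) ` G) = 0"
proof -
  have gr: "group (homeo_grp G)" and PL: "\<And>f. f \<in> G \<Longrightarrow> PL_homeo f"
    and moved: "\<forall>t\<in>{0<..<1}. \<exists>g\<in>G. g t \<noteq> t"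
    using assms(1) unfolding PLT_group_def by auto
  define Orb where "Orb = (\<lambda>g. g b) ` G"
  have "b \<in> {0..1}" using assms(2) by simp
  then have "g b \<in> {0..1}" if "g \<in> G" for g
    using PL_homeo_maps_unit_interval[OF PL[OF that]] by blast
  then have unit: "Orb \<subseteq> {0..1}" unfolding Orb_def by blast
  then have "bdd_below Orb" by (meson atLeastAtMost_iff bdd_below_def subset_iff)
  have "b \<in> Orb" unfolding Orb_def using homeo_grp_closed(1)[OF gr] by (metis id_apply image_eqI)
  then have ne: "Orb \<noteq> {}" by auto
  have closure_unit: "closure Orb \<subseteq> {0..1}" using unit by (simp add: closure_minimal)
  have le: "Inf Orb \<le> h (Inf Orb)" if "h \<in> G" for h
  proof (rule Inf_le_image_of_invariant[OF ne \<open>bdd_below Orb\<close>])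
    show "continuous_on (closure Orb) h"
      using PL_homeoD(5)[OF PL[OF that]] closure_unit by (rule continuous_on_subset)
    show "h ` Orb \<subseteq> Orb"
    proof (clarsimp simp: Orb_def)
      fix g assume "g \<in> G"
      then have "(h \<circ> g) b \<in> (\<lambda>g. g b) ` G" using homeo_grp_closed(2)[OF gr that] by blast
      then show "h (g b) \<in> (\<lambda>g. g b) ` G" by simp
    qed
  qed
  have fixed: "h (Inf Orb) = Inf Orb" if "h \<in> G" for h
  proof -
    have "h (Inf Orb) \<le> h ((inv\<^bsub>homeo_grp G\<^esub> h) (Inf Orb))"
      using le[OF homeo_grp_inv(1)[OF gr that]] PL_homeo_strict_mono[OF PL[OF that]]
      by (simp add: strict_mono_less_eq)
    also have "\<dots> = Inf Orb" using homeo_grp_inv(2)[OF gr that] by (metis comp_apply id_apply)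
    finally show ?thesis using le[OF that] by simp
  qed
  have "0 \<le> Inf Orb" using unit ne by (intro cInf_greatest) auto
  moreover have "Inf Orb < 1" using cInf_lower[OF \<open>b \<in> Orb\<close> \<open>bdd_below Orb\<close>] assms(2) by simp
  ultimately have "Inf Orb \<notin> {0<..<1} \<Longrightarrow> Inf Orb = 0" by auto
  then show ?thesis using moved fixed unfolding Orb_def by blast
qed

lemma finitely_generated_derived_fixes_near_ends:
  assumes "PLT_group G" "finite S" "S \<subseteq> derived (homeo_grp G) G"
  shows "\<forall>\<^sub>F d in at_right 0. generate (homeo_grp G) S \<subseteq> {f \<in> G. \<forall>x\<in>near_ends d. f x = x}"
proof -
  have gr: "group (homeo_grp G)" using assms(1) unfolding PLT_group_def by simp
  have SG: "S \<subseteq> G" using assms(3) group.derived_in_carrier[OF gr] by auto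
  have "\<forall>\<^sub>F d in at_right 0. \<forall>s\<in>S. \<forall>x\<in>near_ends d. s x = x"
    using assms derived_trivial_near_ends unfolding trivial_near_ends_def
    by (intro eventually_ball_finite) auto
  then show ?thesis
  proof (rule eventually_mono)
    fix d assume "\<forall>s\<in>S. \<forall>x\<in>near_ends d. s x = x"
    then have "S \<subseteq> {f \<in> G. \<forall>x\<in>near_ends d. f x = x}" using SG by blast
    then show "generate (homeo_grp G) S \<subseteq> {f \<in> G. \<forall>x\<in>near_ends d. f x = x}"
      by (rule group.generate_subgroup_incl[OF gr _ pointwise_stabilizer_subgroup[OF gr]])
  qed
qed

lemma PLT_orbit_below:
  assumes "PLT_group G" "b \<in> {0<..<1}" "e > 0"
  obtains g where "g \<in> G" "g b < e"
proof -
  have "group (homeo_grp G)" using assms(1) unfolding PLT_group_def by simp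
  then have "(\<lambda>g. g b) ` G \<noteq> {}" using homeo_grp_closed(1) by blast
  moreover have "Inf ((\<lambda>g. g b) ` G) < e" using PLT_orbit_Inf[OF assms(1,2)] assms(3) by simp
  ultimately obtain y where "y \<in> (\<lambda>g. g b) ` G" "y < e"
    using cInf_lessD[of "(\<lambda>g. g b) ` G" e] by blast
  then show ?thesis using that by blast
qed

lemma conj_set_commutes_if_separated:
  assumes gr: "group (homeo_grp G)" and PL: "\<And>f. f \<in> G \<Longrightarrow> PL_homeo f"
    and g: "g \<in> G" "g (1 - d) < d"
    and AB: "A \<union> B \<subseteq> {f \<in> G. \<forall>x\<in>near_ends d. f x = x}"
  shows "\<forall>c\<in>conj_set G A g. \<forall>b\<in>B. c \<circ> b = b \<circ> c"
proof (intro ballI)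
  fix c b assume c: "c \<in> conj_set G A g" and b: "b \<in> B"
  let ?g' = "inv\<^bsub>homeo_grp G\<^esub> g"
  show "c \<circ> b = b \<circ> c"
  proof (rule commute_if_supports_separated)
    obtain a where a: "a \<in> A" "c = g \<circ> a \<circ> ?g'" using c unfolding conj_set_def by auto
    have a_fix: "a y = y" if "1 - d \<le> y" for y
      using AB a(1) that unfolding near_ends_def by blast
    have "c \<in> G" unfolding a(2)
      using AB a(1) g(1) homeo_grp_inv(1)[OF gr] homeo_grp_closed(2)[OF gr] by blast
    then show "inj c" using PL PL_homeo_inj by blast
    show "inj b" using AB b PL PL_homeo_inj by blast
    show "c x = x" if "x \<notin> {..<d}" for x
      unfolding a(2) using that g(2)
      by (intro conjugate_fixes_above[OF PL_homeo_strict_mono[OF PL[OF g(1)]]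
            homeo_grp_inv(2)[OF gr g(1)] a_fix]) auto
    show "b x = x" if "x \<in> {..<d}" for x
      using AB b that unfolding near_ends_def by auto
  qed
qed

theorem lemma4p5:
  fixes G A B :: "(real \<Rightarrow> real) set"
  assumes "PLT_group G"
    and "\<exists>S. finite S \<and> S \<subseteq> derived (homeo_grp G) G \<and> A = generate (homeo_grp G) S"
    and "\<exists>T. finite T \<and> T \<subseteq> derived (homeo_grp G) G \<and> B = generate (homeo_grp G) T"
  shows "\<exists>g\<in>G. \<forall>a\<in>conj_set G A g. \<forall>b\<in>B. a \<circ> b = b \<circ> a"
proof -
  have gr: "group (homeo_grp G)" and PL: "\<And>f. f \<in> G \<Longrightarrow> PL_homeo f"
    using assms(1) unfolding PLT_group_def by auto
  obtain S where S: "finite S" "S \<subseteq> derived (homeo_grp G) G" "A = generate (homeo_grp G) S"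
    using assms(2) by blast
  obtain T where T: "finite T" "T \<subseteq> derived (homeo_grp G) G" "B = generate (homeo_grp G) T"
    using assms(3) by blast
  have "\<forall>\<^sub>F d in at_right 0. A \<subseteq> {f \<in> G. \<forall>x\<in>near_ends d. f x = x}"
    "\<forall>\<^sub>F d in at_right 0. B \<subseteq> {f \<in> G. \<forall>x\<in>near_ends d. f x = x}"
    using finitely_generated_derived_fixes_near_ends[OF assms(1)] S T by simp_all
  moreover have "\<forall>\<^sub>F d in at_right 0. 0 < d \<and> d < (1::real)"
    unfolding eventually_at_right_field by (intro exI[of _ 1]) auto
  ultimately have "\<forall>\<^sub>F d in at_right 0.
      A \<union> B \<subseteq> {f \<in> G. \<forall>x\<in>near_ends d. f x = x} \<and> 0 < d \<and> d < 1"
    by eventually_elim auto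
  then obtain d where AB: "A \<union> B \<subseteq> {f \<in> G. \<forall>x\<in>near_ends d. f x = x}" and d: "0 < d" "d < 1"
    using eventually_happens'[OF trivial_limit_at_right_real] by blast
  obtain g where "g \<in> G" "g (1 - d) < d"
    using PLT_orbit_below[OF assms(1), of "1 - d" d] d by auto
  then show ?thesis using conj_set_commutes_if_separated[OF gr PL _ _ AB] by blast
qed

end
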